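(* Identify the tangent space of $\mathbb O'P^2$ at $P_0=[1,0,0]$ with $\mathbb O'^2$ via the chart $[1,u,v]\mapsto(u,v)$, a pair $(a,b)$ corresponding to the tangent vector with $du=a$, $dv=b$. Then the Riemann curvature tensor of $(\mathbb O'P^2,g)$ at $P_0$ is $$\begin{aligned}R\big((a,b),(c,d),(e,f),(g,h)\big)=&\,4\langle a,e\rangle\langle c,g\rangle-4\langle c,e\rangle\langle a,g\rangle+4\langle b,f\rangle\langle d,h\rangle-4\langle d,f\rangle\langle b,h\rangle\\&-\langle e\bar d,g\bar b\rangle+\langle e\bar b,g\bar d\rangle-\langle c\bar f,a\bar h\rangle+\langle a\bar f,c\bar h\rangle-\langle a\bar d-c\bar b,\ g\bar f-e\bar h\rangle.\end{aligned}$$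
   Context: Para-octonions $\mathbb O'=\mathbb H\oplus\mathbb H$ with product $(q_1,q_2)(p_1,p_2)=(q_1p_1+\bar p_2q_2,\ p_2q_1+q_2\bar p_1)$, conjugation $\overline{(q_1,q_2)}=(\bar q_1,-q_2)$, $\langle a,b\rangle=\mathrm{Re}(a\bar b)$ (signature $(4,4)$), $|a|^2=\langle a,a\rangle$. $\mathbb O'P^2=\mathcal U/_\sim$ where $\mathcal U=\{(1,y,z):1+|y|^2+|z|^2>0\}\cup\{(x,1,z):|x|^2+1+|z|^2>0\}\cup\{(x,y,1):|x|^2+|y|^2+1>0\}$ and $[a,b,c]\sim[d,e,f]$ iff $(a,b,c)=(d\lambda,e\lambda,f\lambda)$ with $|\lambda|^2>0$; charts $[1,u,v]\mapsto(u,v)$ etc. Metric $g$ on each chart, for tangent vector $(du,dv)=(\xi,\eta)$: $ds^2=\frac{|\xi|^2(1+|v|^2)+|\eta|^2(1+|u|^2)-2\mathrm{Re}[(u\bar v)(\eta\bar\xi)]}{(1+|u|^2+|v|^2)^2}$. Curvature convention: in coordinates in which the first derivatives of the metric vanish at the point, $R_{\alpha\beta\gamma\delta}=\tfrac12\big[\partial_\alpha\partial_\delta g_{\beta\gamma}+\partial_\beta\partial_\gamma g_{\alpha\delta}-\partial_\beta\partial_\delta g_{\alpha\gamma}-\partial_\alpha\partial_\gamma g_{\beta\delta}\big]$. *)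

theory Defs
  imports "HOL-Analysis.Analysis"
begin

section \<open>Quaternions (explicit coordinates: a + b i + c j + d k)\<close>

datatype quat = Quat real real real real

fun qadd :: "quat \<Rightarrow> quat \<Rightarrow> quat" where
  "qadd (Quat a1 b1 c1 d1) (Quat a2 b2 c2 d2) = Quat (a1+a2) (b1+b2) (c1+c2) (d1+d2)"

fun qscale :: "real \<Rightarrow> quat \<Rightarrow> quat" where
  "qscale r (Quat a b c d) = Quat (r*a) (r*b) (r*c) (r*d)"

fun qneg :: "quat \<Rightarrow> quat" where
  "qneg (Quat a b c d) = Quat (-a) (-b) (-c) (-d)"

fun qmul :: "quat \<Rightarrow> quat \<Rightarrow> quat" where
  "qmul (Quat a1 b1 c1 d1) (Quat a2 b2 c2 d2) =
     Quat (a1*a2 - b1*b2 - c1*c2 - d1*d2)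
          (a1*b2 + b1*a2 + c1*d2 - d1*c2)
          (a1*c2 - b1*d2 + c1*a2 + d1*b2)
          (a1*d2 + b1*c2 - c1*b2 + d1*a2)"

fun qconj :: "quat \<Rightarrow> quat" where
  "qconj (Quat a b c d) = Quat a (-b) (-c) (-d)"

fun qre :: "quat \<Rightarrow> real" where
  "qre (Quat a b c d) = a"

section \<open>Para-octonions O' = H + H\<close>

datatype pocto = PO quat quat

fun oadd :: "pocto \<Rightarrow> pocto \<Rightarrow> pocto" where
  "oadd (PO q1 q2) (PO p1 p2) = PO (qadd q1 p1) (qadd q2 p2)"

fun oscale :: "real \<Rightarrow> pocto \<Rightarrow> pocto" where
  "oscale r (PO q1 q2) = PO (qscale r q1) (qscale r q2)"

fun omul :: "pocto \<Rightarrow> pocto \<Rightarrow> pocto" where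
  "omul (PO q1 q2) (PO p1 p2) =
     PO (qadd (qmul q1 p1) (qmul (qconj p2) q2)) (qadd (qmul p2 q1) (qmul q2 (qconj p1)))"

fun oconj :: "pocto \<Rightarrow> pocto" where
  "oconj (PO q1 q2) = PO (qconj q1) (qneg q2)"

text \<open>real part: Re (q1,q2) = Re q1 (the real unit is (1,0))\<close>
fun ore :: "pocto \<Rightarrow> real" where
  "ore (PO q1 q2) = qre q1"

definition oinner :: "pocto \<Rightarrow> pocto \<Rightarrow> real" where
  "oinner a b = ore (omul a (oconj b))"

definition onorm2 :: "pocto \<Rightarrow> real" where
  "onorm2 a = oinner a a"

section \<open>Chart [1,u,v] \<mapsto> (u,v), tangent vectors (du,dv)\<close>

type_synonym tvec = "pocto \<times> pocto"

definition tadd :: "tvec \<Rightarrow> tvec \<Rightarrow> tvec" where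
  "tadd X Y = (oadd (fst X) (fst Y), oadd (snd X) (snd Y))"

definition tscale :: "real \<Rightarrow> tvec \<Rightarrow> tvec" where
  "tscale r X = (oscale r (fst X), oscale r (snd X))"

definition ds2 :: "tvec \<Rightarrow> tvec \<Rightarrow> real" where
  "ds2 p X = (let u = fst p; v = snd p; xi = fst X; eta = snd X in
     (onorm2 xi * (1 + onorm2 v) + onorm2 eta * (1 + onorm2 u)
       - 2 * ore (omul (omul u (oconj v)) (omul eta (oconj xi))))
     / (1 + onorm2 u + onorm2 v)^2)"

definition gmet :: "tvec \<Rightarrow> tvec \<Rightarrow> tvec \<Rightarrow> real" where
  "gmet p X Y = (ds2 p (tadd X Y) - ds2 p (tadd X (tscale (-1) Y))) / 4"

definition D2_0 :: "(tvec \<Rightarrow> real) \<Rightarrow> tvec \<Rightarrow> tvec \<Rightarrow> real" where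
  "D2_0 F A B = deriv (\<lambda>s. deriv (\<lambda>t. F (tadd (tscale s B) (tscale t A))) 0) 0"

text \<open>Riemann curvature at P0 = [1,0,0] per the stated convention (first
  derivatives of g vanish at the origin of this chart), extended
  multilinearly from coordinate vectors to arbitrary tangent vectors:
  R(X1,X2,X3,X4) = 1/2 [d_1 d_4 g_23 + d_2 d_3 g_14 - d_2 d_4 g_13 - d_1 d_3 g_24].\<close>
definition Rcurv0 :: "tvec \<Rightarrow> tvec \<Rightarrow> tvec \<Rightarrow> tvec \<Rightarrow> real" where
  "Rcurv0 X1 X2 X3 X4 = (1/2) *
     (D2_0 (\<lambda>p. gmet p X2 X3) X1 X4 + D2_0 (\<lambda>p. gmet p X1 X4) X2 X3
      - D2_0 (\<lambda>p. gmet p X1 X3) X2 X4 - D2_0 (\<lambda>p. gmet p X2 X4) X1 X3)"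

definition osub :: "pocto \<Rightarrow> pocto \<Rightarrow> pocto" where
  "osub a b = oadd a (oscale (-1) b)"

end

theory Submission
  imports Defs
begin

text \<open>
  Polarizing ds^2, the metric at p = (u, v) is
  g_p(X, Y) = (<x1,y1>(1 + |v|^2) + <x2,y2>(1 + |u|^2) - <u conj(v), x1 conj(y2) + y1 conj(x2)>)
              / (1 + |u|^2 + |v|^2)^2.
  On the plane p = sB + tA this is a quadratic polynomial in (s, t) over the square of one with
  constant term 1, so its mixed second derivative at the origin is n_st - 2 n_0 d_st, read off from
  three coefficients. This gives the Hessian of every g(X, Y) at P0 in closed form, and the curvature
  is an explicit combination of para-octonion inner products. Since O' is a composition algebra,
  <p conj(q), r conj(w)> + <p conj(w), r conj(q)> = 2 <p,r> <q,w>, and four instances of this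
  identity turn that combination into the stated one.
\<close>

lemma mixed_deriv_quadratic_over_square_at_0:
  fixes n0 n11 n12 n22 d11 d12 d22 :: real
  shows "deriv (\<lambda>s. deriv (\<lambda>t. (n0 + n11 * s^2 + n12 * s * t + n22 * t^2)
                                / (1 + d11 * s^2 + d12 * s * t + d22 * t^2)^2) 0) 0
         = n12 - 2 * n0 * d12"
proof -
  define F where
    "F s t = (n0 + n11 * s^2 + n12 * s * t + n22 * t^2) / (1 + d11 * s^2 + d12 * s * t + d22 * t^2)^2"
    for s t :: real
  define G where
    "G s = s * (n12 * (1 + d11 * s^2) - 2 * d12 * (n0 + n11 * s^2)) / (1 + d11 * s^2)^3" for s :: real
  have inner: "deriv (F s) 0 = G s" if "1 + d11 * s^2 \<noteq> 0" for s :: real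
  proof (rule DERIV_imp_deriv)
    show "(F s has_field_derivative G s) (at 0)"
      unfolding F_def[abs_def] using that
      by (auto intro!: derivative_eq_intros simp: G_def)
        (simp add: divide_simps, simp add: algebra_simps eval_nat_numeral)
  qed
  have "\<forall>\<^sub>F s in nhds 0. 1 + d11 * s^2 \<noteq> (0::real)"
    by (rule tendsto_imp_eventually_ne[where c = 1]) (auto intro!: tendsto_eq_intros filterlim_ident)
  then have "deriv (\<lambda>s. deriv (F s) 0) 0 = deriv G 0"
    by (rule deriv_cong_ev[OF eventually_mono]) (auto simp: inner)
  also have "deriv G 0 = n12 - 2 * n0 * d12"
  proof (rule DERIV_imp_deriv)
    show "(G has_field_derivative n12 - 2 * n0 * d12) (at 0)"
      unfolding G_def[abs_def] by (auto intro!: derivative_eq_intros)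
  qed
  finally show ?thesis
    unfolding F_def .
qed

lemma pocto_coords_induct:
  "(\<And>x0 x1 x2 x3 x4 x5 x6 x7. P (PO (Quat x0 x1 x2 x3) (Quat x4 x5 x6 x7))) \<Longrightarrow> P x"
  by (metis pocto.exhaust quat.exhaust)

lemma omul_oadd_left: "omul (oadd x y) z = oadd (omul x z) (omul y z)"
  by (induct x rule: pocto_coords_induct; induct y rule: pocto_coords_induct;
      induct z rule: pocto_coords_induct) (simp add: algebra_simps)

lemma omul_oadd_right: "omul z (oadd x y) = oadd (omul z x) (omul z y)"
  by (induct x rule: pocto_coords_induct; induct y rule: pocto_coords_induct;
      induct z rule: pocto_coords_induct) (simp add: algebra_simps)

lemma omul_oscale_left: "omul (oscale r x) y = oscale r (omul x y)"
  by (induct x rule: pocto_coords_induct; induct y rule: pocto_coords_induct)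
     (simp add: algebra_simps)

lemma omul_oscale_right: "omul x (oscale r y) = oscale r (omul x y)"
  by (induct x rule: pocto_coords_induct; induct y rule: pocto_coords_induct)
     (simp add: algebra_simps)

lemma oconj_oadd: "oconj (oadd x y) = oadd (oconj x) (oconj y)"
  by (induct x rule: pocto_coords_induct; induct y rule: pocto_coords_induct) simp

lemma oconj_oscale: "oconj (oscale r x) = oscale r (oconj x)"
  by (induct x rule: pocto_coords_induct) simp

lemma oconj_omul: "oconj (omul x y) = omul (oconj y) (oconj x)"
  by (induct x rule: pocto_coords_induct; induct y rule: pocto_coords_induct)
     (simp add: algebra_simps)

lemma oconj_oconj: "oconj (oconj x) = x"
  by (induct x rule: pocto_coords_induct) simp

lemma ore_oadd: "ore (oadd x y) = ore x + ore y"
  by (induct x rule: pocto_coords_induct; induct y rule: pocto_coords_induct) simp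

lemma ore_oscale: "ore (oscale r x) = r * ore x"
  by (induct x rule: pocto_coords_induct) simp

lemma oinner_commute: "oinner x y = oinner y x"
  unfolding oinner_def
  by (induct x rule: pocto_coords_induct; induct y rule: pocto_coords_induct)
     (simp add: algebra_simps)

lemma oinner_oconj: "oinner (oconj x) (oconj y) = oinner x y"
  unfolding oinner_def
  by (induct x rule: pocto_coords_induct; induct y rule: pocto_coords_induct)
     (simp add: algebra_simps)

lemma oinner_omul_left: "oinner (omul x y) (omul x w) = onorm2 x * oinner y w"
  unfolding oinner_def onorm2_def
  by (induct x rule: pocto_coords_induct; induct y rule: pocto_coords_induct;
      induct w rule: pocto_coords_induct)
     (simp only: omul.simps oconj.simps qmul.simps qadd.simps qconj.simps qneg.simps
        ore.simps qre.simps, algebra)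

lemmas pocto_linear = omul_oadd_left omul_oadd_right omul_oscale_left omul_oscale_right
  oconj_oadd oconj_oscale ore_oadd ore_oscale

lemma oinner_oadd_left: "oinner (oadd x y) z = oinner x z + oinner y z"
  and oinner_oadd_right: "oinner z (oadd x y) = oinner z x + oinner z y"
  and oinner_oscale_left: "oinner (oscale r x) z = r * oinner x z"
  and oinner_oscale_right: "oinner z (oscale r x) = r * oinner z x"
  unfolding oinner_def by (simp_all add: pocto_linear)

lemmas oinner_bilinear =
  oinner_oadd_left oinner_oadd_right oinner_oscale_left oinner_oscale_right

lemma oinner_omul_polarized:
  "oinner (omul x y) (omul z w) + oinner (omul z y) (omul x w) = 2 * oinner x z * oinner y w"
proof -
  have "onorm2 (oadd x z) = onorm2 x + 2 * oinner x z + onorm2 z"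
    unfolding onorm2_def by (simp add: oinner_bilinear oinner_commute[of z x])
  then show ?thesis
    using oinner_omul_left[of "oadd x z" y w] oinner_omul_left[of x y w] oinner_omul_left[of z y w]
    by (simp add: omul_oadd_left oinner_bilinear algebra_simps)
qed

lemma oinner_omul_oconj_swap:
  "oinner (omul p (oconj q)) (omul r (oconj w)) = oinner (omul q (oconj p)) (omul w (oconj r))"
  using oinner_oconj[of "omul p (oconj q)" "omul r (oconj w)"] by (simp add: oconj_omul oconj_oconj)

lemma oinner_omul_oconj_polarized:
  "oinner (omul p (oconj q)) (omul r (oconj w)) + oinner (omul p (oconj w)) (omul r (oconj q))
     = 2 * oinner p r * oinner q w"
  using oinner_omul_polarized[of q "oconj p" w "oconj r"]
  by (simp add: oinner_oconj oinner_omul_oconj_swap[of q] oinner_omul_oconj_swap[of w]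
      oinner_commute[of q])

lemma ore_omul: "ore (omul x y) = oinner x (oconj y)"
  unfolding oinner_def by (simp add: oconj_oconj)

lemma gmet_eq:
  "gmet (u, v) (x1, x2) (y1, y2) =
     (oinner x1 y1 * (1 + onorm2 v) + oinner x2 y2 * (1 + onorm2 u)
      - oinner (omul u (oconj v)) (oadd (omul x1 (oconj y2)) (omul y1 (oconj x2))))
     / (1 + onorm2 u + onorm2 v)^2"
  unfolding gmet_def ds2_def tadd_def tscale_def Let_def onorm2_def ore_omul
  by (simp add: pocto_linear oinner_bilinear oconj_omul oconj_oconj oinner_commute
      diff_divide_distrib add_divide_distrib algebra_simps)

lemma onorm2_plane:
  "onorm2 (oadd (oscale s b) (oscale t a)) = onorm2 b * s^2 + 2 * oinner a b * s * t + onorm2 a * t^2"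
  unfolding onorm2_def
  by (simp add: oinner_bilinear oinner_commute[of b a] power2_eq_square algebra_simps)

lemma oinner_omul_oconj_plane:
  "oinner (omul (oadd (oscale s b1) (oscale t a1)) (oconj (oadd (oscale s b2) (oscale t a2)))) w =
     oinner (omul b1 (oconj b2)) w * s^2
     + oinner (oadd (omul a1 (oconj b2)) (omul b1 (oconj a2))) w * s * t
     + oinner (omul a1 (oconj a2)) w * t^2"
  by (simp add: pocto_linear oinner_bilinear power2_eq_square algebra_simps)

lemma gmet_plane:
  "\<exists>n11 n22 d11 d22. \<forall>s t.
     gmet (tadd (tscale s (b1, b2)) (tscale t (a1, a2))) (x1, x2) (y1, y2) =
       ((oinner x1 y1 + oinner x2 y2) + n11 * s^2
        + (2 * oinner x1 y1 * oinner a2 b2 + 2 * oinner x2 y2 * oinner a1 b1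
           - oinner (oadd (omul a1 (oconj b2)) (omul b1 (oconj a2)))
                    (oadd (omul x1 (oconj y2)) (omul y1 (oconj x2)))) * s * t
        + n22 * t^2)
       / (1 + d11 * s^2 + 2 * (oinner a1 b1 + oinner a2 b2) * s * t + d22 * t^2)^2"
proof -
  define w where "w = oadd (omul x1 (oconj y2)) (omul y1 (oconj x2))"
  have "gmet (tadd (tscale s (b1, b2)) (tscale t (a1, a2))) (x1, x2) (y1, y2) =
       ((oinner x1 y1 + oinner x2 y2)
        + (oinner x1 y1 * onorm2 b2 + oinner x2 y2 * onorm2 b1 - oinner (omul b1 (oconj b2)) w) * s^2
        + (2 * oinner x1 y1 * oinner a2 b2 + 2 * oinner x2 y2 * oinner a1 b1
           - oinner (oadd (omul a1 (oconj b2)) (omul b1 (oconj a2))) w) * s * t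
        + (oinner x1 y1 * onorm2 a2 + oinner x2 y2 * onorm2 a1 - oinner (omul a1 (oconj a2)) w) * t^2)
       / (1 + (onorm2 b1 + onorm2 b2) * s^2 + 2 * (oinner a1 b1 + oinner a2 b2) * s * t
          + (onorm2 a1 + onorm2 a2) * t^2)^2" for s t
    by (simp add: tadd_def tscale_def gmet_eq onorm2_plane oinner_omul_oconj_plane flip: w_def)
       (simp add: algebra_simps)
  then show ?thesis
    unfolding w_def by blast
qed

lemma D2_0_gmet:
  "D2_0 (\<lambda>p. gmet p (x1, x2) (y1, y2)) (a1, a2) (b1, b2) =
     2 * oinner x1 y1 * oinner a2 b2 + 2 * oinner x2 y2 * oinner a1 b1
     - oinner (oadd (omul a1 (oconj b2)) (omul b1 (oconj a2)))
              (oadd (omul x1 (oconj y2)) (omul y1 (oconj x2)))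
     - 4 * (oinner x1 y1 + oinner x2 y2) * (oinner a1 b1 + oinner a2 b2)"
  using gmet_plane[of b1 b2 a1 a2 x1 x2 y1 y2] unfolding D2_0_def
  by (elim exE) (simp only: mixed_deriv_quadratic_over_square_at_0)

theorem corollary6p8:
  fixes a b c d e f g h :: pocto
  shows "Rcurv0 (a, b) (c, d) (e, f) (g, h) =
      4 * oinner a e * oinner c g - 4 * oinner c e * oinner a g
    + 4 * oinner b f * oinner d h - 4 * oinner d f * oinner b h
    - oinner (omul e (oconj d)) (omul g (oconj b))
    + oinner (omul e (oconj b)) (omul g (oconj d))
    - oinner (omul c (oconj f)) (omul a (oconj h))
    + oinner (omul a (oconj f)) (omul c (oconj h))
    - oinner (osub (omul a (oconj d)) (omul c (oconj b)))
             (osub (omul g (oconj f)) (omul e (oconj h)))"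
proof -
  have "oinner (omul a (oconj h)) (omul e (oconj d)) + oinner (omul a (oconj d)) (omul e (oconj h))
          = 2 * oinner a e * oinner h d"
    and "oinner (omul g (oconj b)) (omul c (oconj f)) + oinner (omul g (oconj f)) (omul c (oconj b))
          = 2 * oinner g c * oinner b f"
    and "oinner (omul c (oconj h)) (omul e (oconj b)) + oinner (omul c (oconj b)) (omul e (oconj h))
          = 2 * oinner c e * oinner h b"
    and "oinner (omul g (oconj d)) (omul a (oconj f)) + oinner (omul g (oconj f)) (omul a (oconj d))
          = 2 * oinner g a * oinner d f"
    by (rule oinner_omul_oconj_polarized)+
  then show ?thesis
    unfolding Rcurv0_def D2_0_gmet osub_def
    by (simp add: oinner_bilinear oinner_commute algebra_simps)
qed

end
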